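(* Let $n,l$ be integers with $1\le l\le n-1$ and set $b=l/n$. Let $S_{\mathrm{Indep}}\sim\mathrm{Bin}(n,b)$, and let $S_{\mathrm{Fixed},1}$ be the number of elements of $\{1,\dots,n\}$ contained in a uniformly random $2l$-element subset of $\{1,\dots,2n\}$, i.e. $\Pr(S_{\mathrm{Fixed},1}=k)=\binom{2l}{k}\binom{2n-2l}{n-k}/\binom{2n}{n}$. Then for every integer $k$ with $0\le k\le n$, \[ \frac{\Pr(S_{\mathrm{Fixed},1}=k)}{\Pr(S_{\mathrm{Indep}}=k)}\le 2. \]
   Context: Binomial coefficients $\binom{a}{k}$ are $0$ when $k<0$ or $k>a$. *)

theory Defs
  imports "HOL-Probability.Probability"
begin

definition fixed_prob :: "nat \<Rightarrow> nat \<Rightarrow> nat \<Rightarrow> real" where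
  "fixed_prob n l k =
     real ((2*l) choose k) * real ((2*n - 2*l) choose (n - k)) / real ((2*n) choose n)"

end

theory Submission
  imports Defs
begin

text \<open>Put \<open>Q\<^sub>m(a) = binom(2m, a) a! / m\<^sup>a = \<Prod>\<^sub>i\<^sub><\<^sub>a (2m - i)/m\<close>. With \<open>m = n - l\<close> the ratio
  equals \<open>Q\<^sub>l(k) Q\<^sub>m(n - k) / Q\<^sub>n(n)\<close>. The factor \<open>(2m - i)/m\<close> is at least 1 exactly when
  \<open>i < m\<close>, so \<open>Q\<^sub>m\<close> is maximal at \<open>a = m\<close>. Moreover \<open>ln Q\<^sub>m(m) = \<Sum>\<^sub>j\<^sub><\<^sub>m ln (1 + (j+1)/m)\<close> is
  a Riemann sum of \<open>ln\<close> over \<open>[1, 2]\<close>; comparing it with the integral \<open>2 ln 2 - 1\<close>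
  (monotonicity and concavity of \<open>ln\<close>) gives \<open>(4/e)\<^sup>m \<le> Q\<^sub>m(m) \<le> \<surd>2 (4/e)\<^sup>m\<close>. Hence the
  ratio is at most \<open>\<surd>2 (4/e)\<^sup>l \<surd>2 (4/e)\<^sup>m / (4/e)\<^sup>n = 2\<close>.\<close>

definition scaled_choose :: "nat \<Rightarrow> nat \<Rightarrow> real" where
  "scaled_choose m a = real ((2*m) choose a) * fact a / real m ^ a"

lemma scaled_choose_eq_prod: "scaled_choose m a = (\<Prod>i<a. (2 * real m - real i) / real m)"
proof -
  have "real ((2*m) choose a) * fact a = (\<Prod>i<a. 2 * real m - real i)"
    by (simp add: binomial_gbinomial gbinomial_prod_rev atLeast0LessThan)
  then show ?thesis by (simp add: scaled_choose_def prod_dividef)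
qed

lemma scaled_choose_Suc:
  "scaled_choose m (Suc a) = scaled_choose m a * ((2 * real m - real a) / real m)"
  by (simp add: scaled_choose_eq_prod)

lemma scaled_choose_nonneg: "scaled_choose m a \<ge> 0"
  by (simp add: scaled_choose_def)

lemma scaled_choose_increasing:
  assumes "a < m" shows "scaled_choose m a \<le> scaled_choose m (Suc a)"
proof -
  have "1 \<le> (2 * real m - real a) / real m" using assms by (simp add: field_simps)
  from mult_left_mono[OF this scaled_choose_nonneg] show ?thesis by (simp add: scaled_choose_Suc)
qed

lemma scaled_choose_decreasing:
  assumes "m \<le> a" shows "scaled_choose m (Suc a) \<le> scaled_choose m a"
proof -
  have "(2 * real m - real a) / real m \<le> 1" using assms by (cases "m = 0") (simp_all add: field_simps)
  from mult_left_mono[OF this scaled_choose_nonneg] show ?thesis by (simp add: scaled_choose_Suc)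
qed

lemma scaled_choose_le_central: "scaled_choose m a \<le> scaled_choose m m"
proof (cases "a \<le> m")
  case True
  have "scaled_choose m a \<le> scaled_choose m j" if "a \<le> j" "j \<le> m" for j
    using that
  proof (induction j rule: dec_induct)
    case (step j)
    then show ?case using scaled_choose_increasing[of j m] by simp
  qed simp
  with True show ?thesis by simp
next
  case False
  have "scaled_choose m j \<le> scaled_choose m m" if "m \<le> j" for j
    using that
  proof (induction j rule: dec_induct)
    case (step j)
    then show ?case using scaled_choose_decreasing[of m j] by simp
  qed simp
  with False show ?thesis by simp
qed

lemma ln_ge_two_mul_div:
  fixes t :: real assumes "1 \<le> t" shows "2 * (t - 1) / (t + 1) \<le> ln t"
proof -
  let ?f = "\<lambda>t::real. ln t - 2 * (t - 1) / (t + 1)"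
  have "?f 1 \<le> ?f t"
  proof (rule DERIV_nonneg_imp_nondecreasing[OF assms])
    fix x :: real assume x: "1 \<le> x" "x \<le> t"
    have "(?f has_real_derivative (1/x - 4/(x+1)^2)) (at x)"
      using x by (auto intro!: derivative_eq_intros simp: power2_eq_square field_simps)
    moreover have "1/x - 4/(x+1)^2 = (x-1)^2 / (x*(x+1)^2)"
      using x by (simp add: divide_simps) (simp add: algebra_simps power2_eq_square)
    ultimately show "\<exists>y. (?f has_real_derivative y) (at x) \<and> 0 \<le> y"
      using x by auto
  qed
  then show ?thesis by simp
qed

definition ln_primitive :: "real \<Rightarrow> real" where
  "ln_primitive x = x * ln x - x"

lemma ln_primitive_diff_le:
  assumes "0 < u" "u \<le> v" shows "ln_primitive v - ln_primitive u \<le> (v - u) * ln v"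
proof -
  have "ln v - ln u \<le> v / u - 1"
    using ln_le_minus_one[of "v / u"] assms by (simp add: ln_div)
  then have "u * (ln v - ln u) \<le> v - u"
    using mult_left_mono[of _ _ u] assms by (fastforce simp: field_simps)
  then show ?thesis by (simp add: ln_primitive_def algebra_simps)
qed

text \<open>Concavity of \<open>ln\<close>: the trapezoidal rule underestimates its integral.\<close>
lemma ln_primitive_diff_ge:
  assumes "0 < u" "u \<le> v" shows "(v - u) * (ln u + ln v) / 2 \<le> ln_primitive v - ln_primitive u"
proof -
  define t where "t = v / u"
  have t: "1 \<le> t" and v: "v = u * t" using assms by (simp_all add: t_def)
  have "2 * (t - 1) \<le> (t + 1) * ln t" using ln_ge_two_mul_div[OF t] t by (simp add: field_simps)
  then have "u * (2 * (t - 1)) \<le> u * ((t + 1) * ln t)" using assms by simp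
  moreover have "ln v = ln u + ln t" using assms t by (simp add: v ln_mult)
  then have "2 * (ln_primitive v - ln_primitive u) - (v - u) * (ln u + ln v)
      = u * ((t + 1) * ln t) - u * (2 * (t - 1))"
    by (simp add: ln_primitive_def v algebra_simps)
  ultimately have "(v - u) * (ln u + ln v) \<le> 2 * (ln_primitive v - ln_primitive u)" by linarith
  then show ?thesis by simp
qed

lemma scaled_choose_central_eq_prod:
  assumes "m \<ge> 1" shows "scaled_choose m m = (\<Prod>j<m. 1 + real (Suc j) / real m)"
proof -
  have "scaled_choose m m = (\<Prod>i<m. (\<lambda>j. 1 + real (Suc j) / real m) (m - Suc i))"
    unfolding scaled_choose_eq_prod using assms by (intro prod.cong) (auto simp: of_nat_diff field_simps)
  also have "\<dots> = (\<Prod>j<m. 1 + real (Suc j) / real m)"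
    by (rule prod.nat_diff_reindex)
  finally show ?thesis .
qed

lemma scaled_choose_central_pos: "m \<ge> 1 \<Longrightarrow> 0 < scaled_choose m m"
  by (simp add: scaled_choose_central_eq_prod prod_pos add_pos_nonneg)

lemma ln_scaled_choose_central_bounds:
  assumes "m \<ge> 1"
  shows "real m * (2 * ln 2 - 1) \<le> ln (scaled_choose m m)"
    and "ln (scaled_choose m m) \<le> real m * (2 * ln 2 - 1) + ln 2 / 2"
proof -
  define u where "u j = 1 + real j / real m" for j
  have m: "real m > 0" using assms by simp
  have u_pos: "0 < u j" and u_mono: "u j \<le> u (Suc j)" and u_step: "u (Suc j) - u j = 1 / real m" for j
    using m by (simp_all add: u_def add_pos_nonneg field_simps)
  have u_ends: "u 0 = 1" "u m = 2" using m by (simp_all add: u_def)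
  define S where "S = (\<Sum>j<m. ln (u (Suc j)))"
  have "scaled_choose m m = (\<Prod>j<m. u (Suc j))"
    by (simp add: u_def scaled_choose_central_eq_prod[OF assms])
  then have S: "ln (scaled_choose m m) = S"
    by (simp add: S_def ln_prod u_pos[THEN less_imp_not_eq2])
  have "(\<Sum>j<m. ln (u (Suc j)) - ln (u j)) = ln 2"
    using sum_lessThan_telescope[of "\<lambda>j. ln (u j)" m] by (simp add: u_ends)
  then have S_left: "(\<Sum>j<m. ln (u j)) = S - ln 2"
    by (simp add: S_def sum_subtractf)
  have integral: "(\<Sum>j<m. ln_primitive (u (Suc j)) - ln_primitive (u j)) = 2 * ln 2 - 1"
    using sum_lessThan_telescope[of "\<lambda>j. ln_primitive (u j)" m] by (simp add: u_ends ln_primitive_def)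
  have "2 * ln 2 - 1 \<le> (\<Sum>j<m. (1 / real m) * ln (u (Suc j)))"
    unfolding integral[symmetric] by (intro sum_mono) (metis ln_primitive_diff_le u_pos u_mono u_step)
  also have "\<dots> = S / real m" by (simp add: S_def sum_divide_distrib)
  finally show "real m * (2 * ln 2 - 1) \<le> ln (scaled_choose m m)"
    using m by (simp add: S field_simps)
  have "(\<Sum>j<m. (1 / real m) * (ln (u j) + ln (u (Suc j))) / 2) \<le> 2 * ln 2 - 1"
    unfolding integral[symmetric] by (intro sum_mono) (metis ln_primitive_diff_ge u_pos u_mono u_step)
  moreover have "(\<Sum>j<m. (1 / real m) * (ln (u j) + ln (u (Suc j))) / 2) = (2 * S - ln 2) / (2 * real m)"
    by (simp add: sum.distrib sum_divide_distrib[symmetric] S_left S_def)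
  ultimately have "(2 * S - ln 2) / (2 * real m) \<le> 2 * ln 2 - 1" by linarith
  then show "ln (scaled_choose m m) \<le> real m * (2 * ln 2 - 1) + ln 2 / 2"
    using m by (simp add: S field_simps)
qed

lemma scaled_choose_central_bounds:
  assumes "m \<ge> 1"
  shows "(4 / exp 1) ^ m \<le> scaled_choose m m" and "scaled_choose m m \<le> sqrt 2 * (4 / exp 1) ^ m"
proof -
  have central: "scaled_choose m m = exp (ln (scaled_choose m m))"
    using scaled_choose_central_pos[OF assms] by simp
  have "exp (2 * ln 2 - 1) = (4 :: real) / exp 1"
    by (simp add: exp_diff exp_of_nat_mult[of 2, simplified])
  then have power: "(4 / exp 1) ^ m = exp (real m * (2 * ln 2 - 1))"
    by (simp add: exp_of_nat_mult)
  have "sqrt 2 = exp (ln 2 / 2)"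
    by (simp add: powr_half_sqrt[symmetric] powr_def)
  then have "sqrt 2 * (4 / exp 1) ^ m = exp (real m * (2 * ln 2 - 1) + ln 2 / 2)"
    by (simp add: power exp_add)
  then show "(4 / exp 1) ^ m \<le> scaled_choose m m" "scaled_choose m m \<le> sqrt 2 * (4 / exp 1) ^ m"
    using ln_scaled_choose_central_bounds[OF assms] by (subst central; simp add: power)+
qed

lemma fixed_prob_div_binomial:
  assumes "0 < l" "l < n" "k \<le> n"
  shows "fixed_prob n l k / pmf (binomial_pmf n (real l / real n)) k
       = scaled_choose l k * scaled_choose (n - l) (n - k) / scaled_choose n n"
proof -
  define m where "m = n - l"
  have l: "l \<ge> 1" and m: "m \<ge> 1" and n: "n \<ge> 1" and "2 * n - 2 * l = 2 * m"
    using assms by (auto simp: m_def)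
  have choose_eq: "real ((2 * j) choose a) = scaled_choose j a * real j ^ a / fact a"
    if "j \<ge> 1" for j a
    using that by (simp add: scaled_choose_def)
  have fixed: "fixed_prob n l k = scaled_choose l k * real l ^ k / fact k
      * (scaled_choose m (n - k) * real m ^ (n - k) / fact (n - k))
      / (scaled_choose n n * real n ^ n / fact n)"
    unfolding fixed_prob_def \<open>2 * n - 2 * l = 2 * m\<close> choose_eq[OF l] choose_eq[OF m] choose_eq[OF n] ..
  have "1 - real l / real n = real m / real n"
    using assms by (simp add: m_def of_nat_diff field_simps)
  then have binomial: "pmf (binomial_pmf n (real l / real n)) k
      = fact n / (fact k * fact (n - k)) * (real l ^ k / real n ^ k) * (real m ^ (n - k) / real n ^ (n - k))"
    using assms by (simp add: binomial_fact power_divide)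
  have "real n ^ n = real n ^ k * real n ^ (n - k)"
    using assms(3) by (simp add: power_add[symmetric])
  then show ?thesis
    using l m n scaled_choose_central_pos[OF n]
    unfolding fixed binomial m_def[symmetric] by (simp add: field_simps)
qed

theorem mainTheorem9:
  fixes n l k :: nat
  assumes "1 \<le> l" and "l \<le> n - 1" and "k \<le> n"
  shows "fixed_prob n l k / pmf (binomial_pmf n (real l / real n)) k \<le> 2"
proof -
  define m where "m = n - l"
  define c where "c = 4 / exp (1 :: real)"
  have l: "l \<ge> 1" and m: "m \<ge> 1" and n: "n = l + m" and "n \<ge> 1"
    using assms by (auto simp: m_def)
  have "c > 0" by (simp add: c_def)
  have "fixed_prob n l k / pmf (binomial_pmf n (real l / real n)) k
      = scaled_choose l k * scaled_choose m (n - k) / scaled_choose n n"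
    unfolding m_def by (rule fixed_prob_div_binomial) (use assms in auto)
  also have "\<dots> \<le> scaled_choose l l * scaled_choose m m / scaled_choose n n"
    by (intro divide_right_mono mult_mono scaled_choose_le_central) (simp_all add: scaled_choose_nonneg)
  also have "\<dots> \<le> (sqrt 2 * c ^ l) * (sqrt 2 * c ^ m) / c ^ n"
    using scaled_choose_central_bounds[OF l] scaled_choose_central_bounds[OF m]
      scaled_choose_central_bounds(1)[OF \<open>n \<ge> 1\<close>] \<open>c > 0\<close>
    by (intro frac_le mult_mono) (simp_all add: c_def scaled_choose_nonneg)
  also have "\<dots> = 2"
    using \<open>c > 0\<close> by (simp add: n power_add)
  finally show ?thesis .
qed

end
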